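(* Let $f(x)=\sum_{k=0}^\infty a_k x^k$ be an entire function with $a_k>0$ for all $k\ge 0$, and suppose that $$2\sqrt[3]{2}\le q_2(f)\le q_3(f)\le q_4(f)\le \cdots .$$ Then all but a finite number of zeros of $f$ are real and simple.
   Context: For an entire function $f(z)=\sum_{k=0}^\infty a_k z^k$ with real nonzero coefficients, the second quotients of its Taylor coefficients are $q_n(f):=\frac{a_{n-1}^2}{a_{n-2}a_n}$ for $n\ge 2$. *)

theory Defs
  imports "HOL-Analysis.Analysis"
begin

definition second_quotient :: "(nat \<Rightarrow> real) \<Rightarrow> nat \<Rightarrow> real" where
  "second_quotient a n = (a (n - 1))^2 / (a (n - 2) * a n)"

definition power_series_fun :: "(nat \<Rightarrow> real) \<Rightarrow> complex \<Rightarrow> complex" where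
  "power_series_fun a z = (\<Sum>k. complex_of_real (a k) * z ^ k)"

end

theory Submission
  imports Defs "HOL-Complex_Analysis.Complex_Analysis"
begin

text \<open>Fix a large \<open>m\<close> and the radius \<open>r\<close> with \<open>r\<^sup>2 = a (m+2) / a (m+4)\<close>, so that the two
  neighbours of the central term \<open>a (m+3) z^(m+3)\<close> have equal modulus on \<open>|z| = r\<close>.
  Relative to this term, the real parts of the seven middle terms add up to
  \<open>1 + d1 T\<^sub>1(t) + d2 T\<^sub>2(t) + d3 T\<^sub>3(t)\<close> with Chebyshev polynomials \<open>T\<^sub>i\<close> and \<open>t = Re z / r\<close>,
  which is at least \<open>1 - d1 + d2 - d3\<close>, while \<open>q n \<ge> 2 * root 3 2\<close> makes all other terms
  decay geometrically. Hence \<open>Re (f z * cnj (a (m+3) z^(m+3))) > 0\<close> on the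
  circle, provided \<open>q (m+4) \<ge> 16\<close> or the quotients near \<open>m\<close> differ by less than a factor
  \<open>21/20\<close>; as \<open>q\<close> is nondecreasing, one of the two holds for all large \<open>m\<close>. By Rouch\'e's
  theorem \<open>f\<close> then has exactly \<open>m + 3\<close> zeros, counted with multiplicity, in the disc.
  Consecutive radii at least double, so each annulus between them contains a single simple
  zero, which is real because the zeros of \<open>f\<close> are symmetric under conjugation.\<close>

section \<open>Counting zeros of entire functions\<close>

lemma finite_zeros_in_cball_entire:
  fixes F :: "complex \<Rightarrow> complex"
  assumes holo: "F holomorphic_on UNIV" and nz: "F z0 \<noteq> 0"
  shows "finite {z. norm z \<le> R \<and> F z = 0}"
proof (cases "F constant_on UNIV")
  case True
  with nz have "F z \<noteq> 0" for z
    by (auto simp: constant_on_def)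
  then show ?thesis by simp
next
  case False
  have "finite {z \<in> cball 0 R. F z = 0}"
    by (rule holomorphic_compact_finite_zeros[OF holo open_UNIV connected_UNIV compact_cball subset_UNIV False])
  then show ?thesis by (simp add: cball_def dist_norm)
qed

lemma zorder_pos_entire:
  fixes F :: "complex \<Rightarrow> complex"
  assumes "F holomorphic_on UNIV" "F z0 \<noteq> 0" "F z = 0"
  shows "zorder F z > 0"
  using zorder_exist_zero[OF assms(1) open_UNIV connected_UNIV, of z] assms by auto

lemma deriv_nonzero_if_zorder_1:
  fixes F :: "complex \<Rightarrow> complex"
  assumes holo: "F holomorphic_on UNIV" and nz: "F z0 \<noteq> 0" and order: "zorder F z = 1"
  shows "deriv F z \<noteq> 0"
proof -
  define g where "g = zor_poly F z"
  obtain r where r: "r > 0" and g_holo: "g holomorphic_on cball z r"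
    and factor: "\<forall>w\<in>cball z r. F w = g w * (w - z) ^ nat (zorder F z) \<and> g w \<noteq> 0"
    using zorder_exist_zero[OF holo open_UNIV connected_UNIV, of z] nz unfolding g_def by blast
  then have factor: "\<And>w. w \<in> cball z r \<Longrightarrow> F w = g w * (w - z) \<and> g w \<noteq> 0"
    using order by simp
  have "g field_differentiable at z"
    using g_holo r by (meson ball_subset_cball centre_in_ball holomorphic_on_imp_differentiable_at
        holomorphic_on_subset open_ball)
  then obtain g' where "(g has_field_derivative g') (at z)"
    using field_differentiable_def by blast
  then have "((\<lambda>w. g w * (w - z)) has_field_derivative g z) (at z)"
    by (auto intro!: derivative_eq_intros)
  moreover have near: "eventually (\<lambda>w. F w = g w * (w - z)) (nhds z)"
    using eventually_nhds_in_open[OF open_ball centre_in_ball[THEN iffD2, OF r]]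
    by eventually_elim (use factor in auto)
  ultimately have "(F has_field_derivative g z) (at z)"
    using DERIV_cong_ev[OF refl near refl] by blast
  then show ?thesis
    using DERIV_imp_deriv factor[of z] r by fastforce
qed

lemma zorder_monomial:
  fixes A :: complex
  assumes "A \<noteq> 0"
  shows "zorder (\<lambda>z. A * z ^ k) 0 = int k"
  by (rule zorder_eqI[of UNIV 0 "\<lambda>_. A"]) (use assms in \<open>auto simp: power_int_def\<close>)

lemma winding_number_circlepath_0:
  assumes "r > 0" "norm p \<noteq> r"
  shows "winding_number (circlepath 0 r) p = (if norm p < r then 1 else 0)"
proof (cases "norm p < r")
  case True
  then show ?thesis using winding_number_circlepath[of p 0 r] by simp
next
  case False
  with assms have "winding_number (circlepath 0 r) p = 0"
    by (intro winding_number_zero_outside[of _ "cball 0 r"]) (auto simp: valid_path_imp_path)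
  with False show ?thesis by simp
qed

definition zero_count :: "(complex \<Rightarrow> complex) \<Rightarrow> real \<Rightarrow> int" where
  "zero_count F r = (\<Sum>p | norm p < r \<and> F p = 0. zorder F p)"

lemma winding_zorder_sum_circlepath:
  fixes F :: "complex \<Rightarrow> complex"
  assumes holo: "F holomorphic_on UNIV" and r: "r > 0"
    and nz: "\<And>z. norm z = r \<Longrightarrow> F z \<noteq> 0"
  shows "(\<Sum>p | p \<in> ball 0 (r + 1) \<and> F p = 0. winding_number (circlepath 0 r) p * zorder F p)
       = of_int (zero_count F r)"
proof -
  let ?Z = "{p. p \<in> ball 0 (r + 1) \<and> F p = 0}"
  have "F (of_real r) \<noteq> 0" using nz r by simp
  from finite_zeros_in_cball_entire[OF holo this, of "r + 1"] have fin: "finite ?Z"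
    by (rule finite_subset[rotated]) auto
  have "(\<Sum>p\<in>?Z. winding_number (circlepath 0 r) p * zorder F p)
      = (\<Sum>p\<in>?Z. if norm p < r then of_int (zorder F p) else 0)"
    by (rule sum.cong[OF refl]) (use winding_number_circlepath_0[OF r] nz in fastforce)
  also have "\<dots> = (\<Sum>p | norm p < r \<and> F p = 0. of_int (zorder F p))"
    by (subst sum.inter_filter[OF fin, symmetric]) (auto intro!: sum.cong)
  finally show ?thesis by (simp add: zero_count_def)
qed

lemma norm_diff_less_norm_add:
  fixes u v :: complex
  assumes "Re (u * cnj v) > 0"
  shows "norm (u - v) < norm (u + v)"
proof -
  have "(norm (u + v))\<^sup>2 - (norm (u - v))\<^sup>2 = 4 * Re (u * cnj v)"
    unfolding cmod_power2 by (simp add: algebra_simps power2_eq_square)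
  with assms show ?thesis
    by (smt (verit) norm_ge_zero power_mono)
qed

text \<open>Rouch\'e's theorem for \<open>f = (F + H)/2\<close> and \<open>g = (F - H)/2\<close>, applied to \<open>f + g\<close>
  and to \<open>f - g\<close>.\<close>
lemma zero_count_eq_if_norm_diff_less:
  fixes F H :: "complex \<Rightarrow> complex"
  assumes F: "F holomorphic_on UNIV" and H: "H holomorphic_on UNIV" and r: "r > 0"
    and less: "\<And>z. norm z = r \<Longrightarrow> norm (F z - H z) < norm (F z + H z)"
  shows "zero_count F r = zero_count H r"
proof -
  define f where "f z = (F z + H z) / 2" for z
  define g where "g z = (F z - H z) / 2" for z
  define s where "s = ball (0::complex) (r + 1)"
  let ?\<gamma> = "circlepath 0 r"
  have f_entire: "f holomorphic_on UNIV" and g_entire: "g holomorphic_on UNIV"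
    unfolding f_def g_def using F H by (auto intro!: holomorphic_intros)
  then have f_holo: "f holomorphic_on s" and g_holo: "g holomorphic_on s"
    by (auto intro: holomorphic_on_subset)
  have fg: "norm (g z) < norm (f z)" if "z \<in> path_image ?\<gamma>" for z
    using less[of z] that r by (simp add: f_def g_def norm_divide)
  have nzF: "F z \<noteq> 0" and nzH: "H z \<noteq> 0" if "norm z = r" for z
    using less[OF that] by auto
  have fin: "finite {p \<in> s. G p = 0}" if "G holomorphic_on UNIV" "G (of_real r) \<noteq> 0" for G
    by (rule finite_subset[OF _ finite_zeros_in_cball_entire[OF that, of "r + 1"]]) (auto simp: s_def)
  have "f (of_real r) \<noteq> 0"
    using fg[of "of_real r"] r by auto
  then have fin_f: "finite {p \<in> s. f p = 0}"
    by (rule fin[OF f_entire])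
  have img: "path_image ?\<gamma> \<subseteq> s" and homo: "\<forall>z. z \<notin> s \<longrightarrow> winding_number ?\<gamma> z = 0"
    using r by (auto simp: s_def intro!: winding_number_zero_outside[of _ "cball 0 r"] valid_path_imp_path)
  have sum_F: "f p + g p = F p" and sum_H: "f p + (- g) p = H p"
    and zero_H: "f p = g p \<longleftrightarrow> H p = 0" for p
    by (auto simp: f_def g_def field_simps)
  have R1: "(\<Sum>p\<in>{p \<in> s. f p + g p = 0}. winding_number ?\<gamma> p * zorder (\<lambda>p. f p + g p) p)
      = (\<Sum>p\<in>{p \<in> s. f p = 0}. winding_number ?\<gamma> p * zorder f p)"
    by (rule Rouche_theorem) (use fin[OF F nzF] fin_f f_holo g_holo img homo fg r in
        \<open>auto simp: sum_F s_def\<close>)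
  have R2: "(\<Sum>p\<in>{p \<in> s. f p + (- g) p = 0}. winding_number ?\<gamma> p * zorder (\<lambda>p. f p + (- g) p) p)
      = (\<Sum>p\<in>{p \<in> s. f p = 0}. winding_number ?\<gamma> p * zorder f p)"
    by (rule Rouche_theorem) (use fin[OF H nzH] fin_f f_holo g_holo img homo fg r in
        \<open>auto simp: sum_H zero_H s_def intro!: holomorphic_intros\<close>)
  have "(\<Sum>p\<in>{p \<in> s. F p = 0}. winding_number ?\<gamma> p * zorder F p)
      = (\<Sum>p\<in>{p \<in> s. H p = 0}. winding_number ?\<gamma> p * zorder H p)"
    using R1 R2 by (simp only: sum_F sum_H)
  then show ?thesis
    using winding_zorder_sum_circlepath[OF F r nzF] winding_zorder_sum_circlepath[OF H r nzH]
    by (simp add: s_def)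
qed

lemma zero_count_monomial:
  fixes A :: complex
  assumes "A \<noteq> 0" "r > 0"
  shows "zero_count (\<lambda>z. A * z ^ k) r = int k"
proof (cases "k = 0")
  case True
  with assms show ?thesis by (simp add: zero_count_def)
next
  case False
  with assms have "{p. norm p < r \<and> A * p ^ k = 0} = {0}" by auto
  with zorder_monomial[OF assms(1)] show ?thesis by (simp add: zero_count_def)
qed

lemma zero_count_dominant_monomial:
  fixes F :: "complex \<Rightarrow> complex" and A :: complex
  assumes holo: "F holomorphic_on UNIV" and A: "A \<noteq> 0" and r: "r > 0"
    and dominant: "\<And>z. norm z = r \<Longrightarrow> Re (F z * cnj (A * z ^ k)) > 0"
  shows "zero_count F r = int k"
proof -
  have "zero_count F r = zero_count (\<lambda>z. A * z ^ k) r"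
    by (rule zero_count_eq_if_norm_diff_less[OF holo _ r])
      (auto intro!: holomorphic_intros norm_diff_less_norm_add dominant)
  with zero_count_monomial[OF A r] show ?thesis by simp
qed

text \<open>The annulus carries total multiplicity one, yet contains both \<open>p\<close> and \<open>cnj p\<close>.\<close>
lemma real_simple_zero_in_annulus:
  fixes F :: "complex \<Rightarrow> complex"
  assumes holo: "F holomorphic_on UNIV" and nz: "F z0 \<noteq> 0"
    and symmetric: "\<And>z. F (cnj z) = cnj (F z)"
    and count: "zero_count F s = zero_count F r + 1"
    and p: "F p = 0" "r \<le> norm p" "norm p < s"
  shows "p \<in> \<real> \<and> deriv F p \<noteq> 0"
proof -
  define Ann where "Ann = {q. r \<le> norm q \<and> norm q < s \<and> F q = 0}"
  have fin: "finite {q. norm q < s \<and> F q = 0}"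
    by (rule finite_subset[OF _ finite_zeros_in_cball_entire[OF holo nz, of s]]) auto
  have split: "{q. norm q < s \<and> F q = 0} = {q. norm q < r \<and> F q = 0} \<union> Ann"
    using p by (auto simp: Ann_def)
  have "zero_count F s = zero_count F r + (\<Sum>q\<in>Ann. zorder F q)"
    unfolding zero_count_def split
    by (rule sum.union_disjoint) (use fin split in \<open>auto simp: Ann_def\<close>)
  with count have sum_Ann: "(\<Sum>q\<in>Ann. zorder F q) = 1" by simp
  have finA: "finite Ann" using fin split by simp
  have pos: "zorder F q \<ge> 1" if "q \<in> Ann" for q
    using zorder_pos_entire[OF holo nz, of q] that by (auto simp: Ann_def)
  have pA: "p \<in> Ann" and cpA: "cnj p \<in> Ann"
    using p symmetric[of p] by (auto simp: Ann_def)
  have "cnj p = p"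
  proof (rule ccontr)
    assume "cnj p \<noteq> p"
    then have "zorder F p + zorder F (cnj p) \<le> (\<Sum>q\<in>Ann. zorder F q)"
      using sum_mono2[OF finA, of "{p, cnj p}" "zorder F"] pA cpA pos by force
    with pos[OF pA] pos[OF cpA] sum_Ann show False by linarith
  qed
  moreover have "zorder F p \<le> (\<Sum>q\<in>Ann. zorder F q)"
    by (rule member_le_sum[OF pA _ finA]) (use pos in force)
  with pos[OF pA] sum_Ann have "zorder F p = 1" by linarith
  ultimately show ?thesis
    using deriv_nonzero_if_zorder_1[OF holo nz] by (simp add: Reals_cnj_iff)
qed

lemma finite_nonreal_or_multiple_zeros:
  fixes F :: "complex \<Rightarrow> complex" and \<rho> :: "nat \<Rightarrow> real"
  assumes holo: "F holomorphic_on UNIV" and nz: "F z0 \<noteq> 0"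
    and symmetric: "\<And>z. F (cnj z) = cnj (F z)"
    and unbounded: "filterlim \<rho> at_top sequentially"
    and count: "eventually (\<lambda>m. zero_count F (\<rho> (Suc m)) = zero_count F (\<rho> m) + 1) sequentially"
  shows "finite {z. F z = 0 \<and> (z \<notin> \<real> \<or> deriv F z = 0)}"
proof -
  obtain K where count: "\<And>m. m \<ge> K \<Longrightarrow> zero_count F (\<rho> (Suc m)) = zero_count F (\<rho> m) + 1"
    using count by (auto simp: eventually_sequentially)
  have good: "p \<in> \<real> \<and> deriv F p \<noteq> 0"
    if "m \<ge> K" "F p = 0" "\<rho> K \<le> norm p" "norm p < \<rho> m" for m p
    using that
  proof (induction m arbitrary: p rule: dec_induct)
    case (step m)
    show ?case
    proof (cases "norm p < \<rho> m")
      case True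
      with step show ?thesis by blast
    next
      case False
      with step show ?thesis
        by (intro real_simple_zero_in_annulus[OF holo nz symmetric count]) auto
    qed
  qed simp
  have "{z. F z = 0 \<and> (z \<notin> \<real> \<or> deriv F z = 0)} \<subseteq> {z. norm z \<le> \<rho> K \<and> F z = 0}"
  proof
    fix p assume "p \<in> {z. F z = 0 \<and> (z \<notin> \<real> \<or> deriv F z = 0)}"
    then have p: "F p = 0" "\<not> (p \<in> \<real> \<and> deriv F p \<noteq> 0)" by auto
    obtain m where "m \<ge> K" "norm p < \<rho> m"
      using eventually_conj[OF eventually_ge_at_top[of K]
          unbounded[unfolded filterlim_at_top_dense, rule_format, of "norm p"]]
      by (auto simp: eventually_at_top_linorder)
    with good[of m p] p show "p \<in> {z. norm z \<le> \<rho> K \<and> F z = 0}" by fastforce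
  qed
  then show ?thesis
    by (rule finite_subset) (rule finite_zeros_in_cball_entire[OF holo nz])
qed


lemma power_series_fun_holomorphic:
  assumes "\<And>z. summable (\<lambda>k. complex_of_real (a k) * z ^ k)"
  shows "power_series_fun a holomorphic_on UNIV"
  unfolding power_series_fun_def holomorphic_on_def field_differentiable_def
  using termdiffs_strong_converges_everywhere[OF assms] has_field_derivative_at_within by blast

lemma power_series_fun_cnj:
  assumes "\<And>z. summable (\<lambda>k. complex_of_real (a k) * z ^ k)"
  shows "power_series_fun a (cnj z) = cnj (power_series_fun a z)"
proof -
  have "(\<lambda>k. cnj (complex_of_real (a k) * z ^ k)) sums cnj (power_series_fun a z)"
    using summable_sums[OF assms[of z]] by (simp only: sums_cnj power_series_fun_def)
  then have "(\<lambda>k. complex_of_real (a k) * cnj z ^ k) sums cnj (power_series_fun a z)"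
    by simp
  then show ?thesis
    by (simp add: power_series_fun_def sums_iff)
qed

lemma power_series_fun_0: "power_series_fun a 0 = complex_of_real (a 0)"
  by (simp add: power_series_fun_def)



lemma cube_two_cbrt_two: "(2 * root 3 2 :: real) ^ 3 = 16"
  by (simp add: power_mult_distrib real_root_pow_pos2)

lemma two_cbrt_two_ge: "(5/2 :: real) \<le> 2 * root 3 2"
proof (rule ccontr)
  assume "\<not> ?thesis"
  then have "(2 * root 3 2)^3 < (5/2 :: real)^3"
    by (intro power_strict_mono) auto
  then show False using cube_two_cbrt_two by (simp add: power_divide)
qed

lemma Re_power2_unit:
  fixes w :: complex
  assumes "norm w = 1"
  shows "Re (w ^ 2) = 2 * (Re w)^2 - 1"
proof -
  have "(Re w)^2 + (Im w)^2 = 1" using assms by (simp add: cmod_power2[symmetric])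
  then show ?thesis by (simp add: power2_eq_square)
qed

lemma Re_power3_unit:
  fixes w :: complex
  assumes "norm w = 1"
  shows "Re (w ^ 3) = 4 * (Re w)^3 - 3 * Re w"
proof -
  have "(Re w)^2 + (Im w)^2 = 1" using assms by (simp add: cmod_power2[symmetric])
  then have im: "(Im w)^2 = 1 - (Re w)^2" by simp
  have "Re (w^3) = (Re w)^3 - 3 * Re w * (Im w)^2"
    by (simp add: power3_eq_cube power2_eq_square algebra_simps)
  also have "\<dots> = (Re w)^3 - 3 * Re w * (1 - (Re w)^2)"
    by (simp only: im)
  finally show ?thesis by (simp add: algebra_simps power2_eq_square power3_eq_cube)
qed

lemma power_mult_cnj_power_unit:
  fixes w :: complex
  assumes "norm w = 1"
  shows "w ^ (k + i) * cnj w ^ k = w ^ i"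
    and "i \<le> k \<Longrightarrow> Re (w ^ (k - i) * cnj w ^ k) = Re (w ^ i)"
proof -
  have unit: "w * cnj w = 1"
    using assms by (simp add: complex_mult_cnj cmod_power2[symmetric] complex_eq_iff)
  show "w ^ (k + i) * cnj w ^ k = w ^ i"
    by (simp add: power_add mult.assoc mult.left_commute power_mult_distrib[symmetric] unit)
  assume "i \<le> k"
  then obtain n where "k = n + i" by (metis le_add_diff_inverse2)
  then have "w ^ (k - i) * cnj w ^ k = cnj w ^ i * (w * cnj w) ^ n"
    by (simp add: power_add power_mult_distrib algebra_simps)
  then show "Re (w ^ (k - i) * cnj w ^ k) = Re (w ^ i)"
    by (simp add: unit flip: complex_cnj_power)
qed

text \<open>For \<open>d1 \<ge> 4 * d2\<close> the minimum over \<open>[-1, 1]\<close> is attained at \<open>t = -1\<close>.\<close>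
lemma chebyshev_sum_ge:
  fixes t d1 d2 d3 :: real
  assumes "-1 \<le> t" "t \<le> 1" "4 * d2 \<le> d1" "0 \<le> d2" "0 \<le> d3"
  shows "1 - d1 + d2 - d3 \<le> 1 + d1 * t + d2 * (2 * t^2 - 1) + d3 * (4 * t^3 - 3 * t)"
proof -
  have "1 + d1 * t + d2 * (2 * t^2 - 1) + d3 * (4 * t^3 - 3 * t) - (1 - d1 + d2 - d3)
      = (t + 1) * (d1 + 2 * d2 * (t - 1)) + d3 * ((t + 1) * (2 * t - 1)^2)"
    by (simp add: algebra_simps power2_eq_square power3_eq_cube)
  moreover have "d2 * (-2) \<le> d2 * (t - 1)"
    using assms by (intro mult_left_mono) auto
  then have "0 \<le> (t + 1) * (d1 + 2 * d2 * (t - 1))"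
    using assms by (intro mult_nonneg_nonneg) auto
  moreover have "0 \<le> d3 * ((t + 1) * (2 * t - 1)^2)"
    using assms by simp
  ultimately show ?thesis by linarith
qed

lemma sum_lessThan_le_ratio:
  fixes f :: "nat \<Rightarrow> real"
  assumes step: "\<And>j. j < n \<Longrightarrow> f j \<le> c * f (Suc j)" and "\<And>j. 0 \<le> f j" "0 \<le> c" "c < 1"
  shows "(\<Sum>j<n. f j) \<le> f n * c / (1 - c)"
  using step
proof (induction n)
  case (Suc n)
  have "(\<Sum>j<Suc n. f j) \<le> f n * c / (1 - c) + f n"
    using Suc by simp
  also have "\<dots> = f n / (1 - c)"
    using assms by (simp add: field_simps)
  also have "\<dots> \<le> c * f (Suc n) / (1 - c)"
    using Suc.prems[of n] assms by (intro divide_right_mono) auto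
  finally show ?case by (simp add: mult.commute)
qed (use assms in simp)

lemma suminf_Suc_le_ratio:
  fixes f :: "nat \<Rightarrow> real"
  assumes step: "\<And>i. f (Suc i) \<le> c * f i" and nonneg: "\<And>i. 0 \<le> f i" and "0 \<le> c" "c < 1"
  shows "summable (\<lambda>i. f (Suc i))" and "(\<Sum>i. f (Suc i)) \<le> f 0 * c / (1 - c)"
proof -
  have le: "f (Suc i) \<le> f 0 * c ^ Suc i" for i
  proof (induction i)
    case (Suc i)
    have "f (Suc (Suc i)) \<le> c * f (Suc i)" by (rule step)
    also have "\<dots> \<le> c * (f 0 * c ^ Suc i)" using Suc assms by (intro mult_left_mono) auto
    finally show ?case by (simp add: algebra_simps)
  qed (use step[of 0] in \<open>simp add: mult.commute\<close>)
  have geom: "(\<lambda>i. f 0 * c ^ Suc i) sums (f 0 * c / (1 - c))"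
    using sums_mult[OF geometric_sums[of c], of "f 0 * c"] assms by (simp add: algebra_simps)
  show summable: "summable (\<lambda>i. f (Suc i))"
    by (rule summable_comparison_test[OF _ sums_summable[OF geom]]) (use le nonneg in auto)
  show "(\<Sum>i. f (Suc i)) \<le> f 0 * c / (1 - c)"
    using suminf_le[OF le summable sums_summable[OF geom]] sums_unique[OF geom] by simp
qed

lemma suminf_ge_block_minus_tails:
  fixes T e :: "nat \<Rightarrow> real"
  assumes "summable e" and bound: "\<And>j. \<bar>T j\<bar> \<le> e j"
  shows "summable T"
    and "(\<Sum>i<n. T (m + i)) - ((\<Sum>j<m. e j) + (\<Sum>i. e (i + (m + n)))) \<le> suminf T"
proof -
  show T: "summable T"
    by (rule summable_comparison_test[OF _ \<open>summable e\<close>]) (use bound in auto)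
  have lower: "- e j \<le> T j" for j using bound[of j] by (simp add: abs_le_iff)
  have "- (\<Sum>i. e (i + (m + n))) \<le> (\<Sum>i. T (i + (m + n)))"
    using suminf_le[OF lower summable_minus[OF summable_ignore_initial_segment[OF \<open>summable e\<close>]]
        summable_ignore_initial_segment[OF T]]
    by (simp add: suminf_minus[OF summable_ignore_initial_segment[OF \<open>summable e\<close>]])
  moreover have "- (\<Sum>j<m. e j) \<le> (\<Sum>j<m. T j)"
    using sum_mono[of "{..<m}", OF lower] by (simp add: sum_negf)
  moreover have "(\<Sum>j<m + n. T j) = (\<Sum>j<m. T j) + (\<Sum>i<n. T (m + i))"
    by (induction n) (simp_all add: ac_simps)
  ultimately show "(\<Sum>i<n. T (m + i)) - ((\<Sum>j<m. e j) + (\<Sum>i. e (i + (m + n)))) \<le> suminf T"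
    using suminf_split_initial_segment[OF T, of "m + n"] by simp
qed

lemma le_63_100_if_cube_le:
  fixes x :: real
  assumes "0 < x" "x^3 \<le> 1/4"
  shows "x \<le> 63/100"
proof (rule ccontr)
  assume "\<not> x \<le> 63/100"
  then have "(63/100::real)^3 < x^3" by (intro power_strict_mono) auto
  with assms show False by (simp add: power_divide)
qed

lemma tail_bound_numeric:
  fixes x :: real
  assumes "0 < x" "x^3 \<le> 1/4"
  shows "x^3 / 16 * (x / 16) / (1 - x / 16) + x^16 / (1 - x^7) \<le> 14/10000"
proof -
  have x: "x \<le> 63/100" using le_63_100_if_cube_le assms by blast
  have "x^7 \<le> (63/100)^7" using x assms by (intro power_mono) auto
  then have x7: "x^7 \<le> 1/25" by (simp add: power_divide)
  have "x^16 = (x^3)^5 * x" by (simp flip: power_mult power_Suc2)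
  also have "\<dots> \<le> (1/4)^5 * (63/100)" using assms x by (intro mult_mono power_mono) auto
  finally have "x^16 / (1 - x^7) \<le> ((1/4)^5 * (63/100)) / (24/25)"
    using x7 by (intro frac_le) auto
  moreover have "x^3 * x \<le> (1/4) * (63/100)" using assms x by (intro mult_mono) auto
  then have "x^3 / 16 * (x / 16) \<le> (1/4) * (63/100) / 256" by (simp add: mult.commute)
  then have "x^3 / 16 * (x / 16) / (1 - x / 16) \<le> ((1/4) * (63/100) / 256) / (24/25)"
    using x assms by (intro frac_le) auto
  ultimately show ?thesis by (simp add: power_divide)
qed

lemma flat_case_numeric:
  fixes x :: real
  assumes "0 < x" "x^3 \<le> 1/4"
  shows "0 < 1 - 2 * x + 41/21 * x^4 - (1 + (21/20)^3) * x^9 - 14/10000"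
proof -
  define p :: real where "p = 63/100"
  have x: "x \<le> p" using le_63_100_if_cube_le assms by (simp add: p_def)
  have "p^2 * x \<le> p^2 * p" "p * x^2 \<le> p * p^2" "x^3 \<le> p^3"
    using x assms by (auto simp: p_def intro!: mult_left_mono power_mono)
  then have "41/21 * (p^3 + p^2 * x + p * x^2 + x^3) \<le> 2"
    by (simp add: p_def power2_eq_square power3_eq_cube)
  then have "0 \<le> (p - x) * (2 - 41/21 * (p^3 + p^2 * x + p * x^2 + x^3))"
    using x by simp
  also have "(p - x) * (2 - c * (p^3 + p^2 * x + p * x^2 + x^3))
      = (1 - 2 * x + c * x^4) - (1 - 2 * p + c * p^4)" for c
    by (simp add: algebra_simps power2_eq_square power3_eq_cube power4_eq_xxxx)
  finally have decr: "1 - 2 * p + 41/21 * p^4 \<le> 1 - 2 * x + 41/21 * x^4" by simp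
  have "x^9 = (x^3)^3" by (simp flip: power_mult)
  also have "\<dots> \<le> (1/4)^3" using assms by (intro power_mono) auto
  finally have "(1 + (21/20)^3) * x^9 \<le> (1 + (21/20)^3) * (1/4 :: real)^3"
    by (rule mult_left_mono) simp
  moreover have "0 < 1 - 2 * p + 41/21 * p^4 - (1 + (21/20)^3) * (1/4 :: real)^3 - 14/10000"
    by (simp add: p_def power_divide)
  ultimately show ?thesis using decr by linarith
qed

lemma large_case_numeric:
  fixes x :: real
  assumes "0 < x" "x \<le> 1/4"
  shows "0 < 1 - 2 * x - (x^9 + x^3 / 16) - 14/10000"
proof -
  have "x^9 \<le> x" "x^3 \<le> x" using assms by (auto intro: power_le_one_iff[THEN iffD2] power_decreasing[of 1, simplified])
  with assms show ?thesis by simp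
qed

section \<open>Nondecreasing second quotients\<close>

locale increasing_second_quotients =
  fixes a :: "nat \<Rightarrow> real"
  assumes pos: "\<And>k. 0 < a k"
    and q2_ge: "2 * root 3 2 \<le> second_quotient a 2"
    and q_mono_Suc: "\<And>n. 2 \<le> n \<Longrightarrow> second_quotient a n \<le> second_quotient a (Suc n)"
begin

abbreviation q :: "nat \<Rightarrow> real" where "q \<equiv> second_quotient a"

lemma q_mono:
  assumes "2 \<le> m" "m \<le> n"
  shows "q m \<le> q n"
  using assms(2)
proof (induction n rule: dec_induct)
  case (step n)
  then show ?case using q_mono_Suc[of n] assms(1) by linarith
qed simp

lemma q_ge: "2 \<le> n \<Longrightarrow> 2 * root 3 2 \<le> q n"
  using q_mono[of 2 n] q2_ge by simp

lemma q_ge_5_2: "2 \<le> n \<Longrightarrow> 5/2 \<le> q n"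
  using q_ge two_cbrt_two_ge by fastforce

lemma q_pos: "2 \<le> n \<Longrightarrow> 0 < q n"
  using q_ge_5_2[of n] by simp

lemma q_cube_ge_16: "2 \<le> n \<Longrightarrow> 16 \<le> q n ^ 3"
  using power_mono[OF q_ge, of n 3] cube_two_cbrt_two by (simp add: two_cbrt_two_ge)

text \<open>The two regimes in which the term \<open>a (m+3) z^(m+3)\<close> dominates on \<open>|z| = radius m\<close>.\<close>
definition admissible :: "nat \<Rightarrow> bool" where
  "admissible m \<longleftrightarrow> 16 \<le> q (m+4) \<or> (q (m+5) \<le> 21/20 * q (m+4) \<and> q (m+4) \<le> 21/20 * q (m+2))"

lemma eventually_admissible: "eventually admissible sequentially"
proof (cases "\<exists>N\<ge>2. 16 \<le> q N")
  case True
  then obtain N where "2 \<le> N" "16 \<le> q N" by blast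
  then have "admissible n" if "N \<le> n" for n
    using q_mono[of N "n+4"] that by (simp add: admissible_def)
  then show ?thesis by (auto simp: eventually_at_top_linorder)
next
  case False
  define L where "L = (SUP n\<in>{2..}. q n)"
  have "q n \<le> 16" if "2 \<le> n" for n
    using False that by (metis less_imp_le not_le)
  then have bdd: "bdd_above (q ` {2..})"
    by (auto simp: bdd_above_def)
  have le_L: "q n \<le> L" if "2 \<le> n" for n
    unfolding L_def by (rule cSup_upper) (use that bdd in auto)
  have "20/21 * L < L"
    using le_L[of 2] q_ge_5_2[of 2] by simp
  moreover have "q ` {2..} \<noteq> {}" by auto
  ultimately have "\<exists>y\<in>q ` {2..}. 20/21 * L < y"
    using less_cSup_iff[OF _ bdd] unfolding L_def by blast
  then obtain N where N: "2 \<le> N" "20/21 * L < q N" by auto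
  have "admissible n" if "N \<le> n" for n
    using q_mono[of N "n+2"] q_mono[of N "n+4"] le_L[of "n+4"] le_L[of "n+5"] N that
    by (simp add: admissible_def)
  then show ?thesis by (auto simp: eventually_at_top_linorder)
qed

definition radius :: "nat \<Rightarrow> real" where
  "radius m = sqrt (a (m+2) / a (m+4))"

lemma radius_pos: "0 < radius m"
  using pos by (simp add: radius_def)

lemma radius_sq: "radius m ^ 2 = a (m+2) / a (m+4)"
  using pos[of "m+2"] pos[of "m+4"] by (simp add: radius_def less_imp_le)

lemma radius_Suc_ge: "2 * radius m \<le> radius (Suc m)"
proof -
  have "Suc m + 2 = m + 3" "Suc m + 4 = m + 5" by simp_all
  then have Suc_sq: "radius (Suc m) ^ 2 = a (m+3) / a (m+5)"
    using radius_sq[of "Suc m"] by (simp only:)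
  have q45: "q (m+4) * q (m+5) = (a (m+3) / a (m+5)) / (a (m+2) / a (m+4))"
    using pos[of "m+2"] pos[of "m+3"] pos[of "m+4"] pos[of "m+5"]
    by (simp add: second_quotient_def field_simps power2_eq_square eval_nat_numeral)
  have "a (m+2) / a (m+4) \<noteq> 0" using pos[of "m+2"] pos[of "m+4"] by simp
  then have Suc_eq: "radius (Suc m) ^ 2 = radius m ^ 2 * (q (m+4) * q (m+5))"
    unfolding Suc_sq radius_sq[of m] q45 by simp
  have "5/2 * (5/2) \<le> q (m+4) * q (m+5)"
    using q_ge_5_2[of "m+4"] q_ge_5_2[of "m+5"] by (intro mult_mono) auto
  then have "radius m ^ 2 * 4 \<le> radius m ^ 2 * (q (m+4) * q (m+5))"
    by (intro mult_left_mono) auto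
  moreover have "(2 * radius m) ^ 2 = radius m ^ 2 * 4"
    by (simp add: power_mult_distrib)
  ultimately have "(2 * radius m) ^ 2 \<le> radius (Suc m) ^ 2"
    unfolding Suc_eq by linarith
  then show ?thesis
    by (rule power2_le_imp_le) (simp add: less_imp_le radius_pos)
qed

lemma filterlim_radius: "filterlim radius at_top sequentially"
proof -
  have lower: "radius 0 * (1 + real m) \<le> radius m" for m
  proof (induction m)
    case (Suc m)
    moreover have "0 \<le> radius 0 * real m" using radius_pos[of 0] by simp
    ultimately show ?case using radius_Suc_ge[of m] by (simp add: distrib_left)
  qed simp
  have "filterlim (\<lambda>m. 1 + real m) at_top sequentially"
    by (rule filterlim_tendsto_add_at_top[OF tendsto_const filterlim_real_sequentially])
  with radius_pos have "filterlim (\<lambda>m. radius 0 * (1 + real m)) at_top sequentially"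
    by (rule filterlim_tendsto_pos_mult_at_top[OF tendsto_const])
  then show ?thesis
    by (rule filterlim_at_top_mono) (intro always_eventually allI lower)
qed

end

section \<open>Dominance of the central term\<close>

text \<open>On the circle \<open>|z| = r\<close> the terms \<open>a (m+2) z^(m+2)\<close> and \<open>a (m+4) z^(m+4)\<close> have equal
  modulus; \<open>rel_term j\<close> is the modulus of the \<open>j\<close>-th term relative to the central one.\<close>
locale central_circle = increasing_second_quotients +
  fixes m :: nat and r :: real
  assumes m_ge: "2 \<le> m" and r_pos: "0 < r" and r_sq: "r ^ 2 = a (m+2) / a (m+4)"
begin

definition rel_term :: "nat \<Rightarrow> real" where
  "rel_term j = a j * r ^ j / (a (m+3) * r ^ (m+3))"

definition step_ratio :: "nat \<Rightarrow> real" where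
  "step_ratio j = r * a (Suc j) / a j"

definition \<xi> :: real where
  "\<xi> = rel_term (m+4)"

lemma rel_term_pos: "0 < rel_term j"
  using pos r_pos by (simp add: rel_term_def)

lemma rel_term_Suc: "rel_term (Suc j) = rel_term j * step_ratio j"
  using pos[of j] by (simp add: rel_term_def step_ratio_def field_simps)

lemma step_ratio_Suc: "step_ratio (Suc j) = step_ratio j / q (j+2)"
  using pos[of j] pos[of "Suc j"] pos[of "j+2"]
  by (simp add: step_ratio_def second_quotient_def field_simps power2_eq_square)

lemma step_ratio_antimono:
  assumes "i \<le> j"
  shows "step_ratio j \<le> step_ratio i"
  using assms
proof (induction j rule: dec_induct)
  case (step j)
  have "0 < step_ratio j" using pos r_pos by (simp add: step_ratio_def)
  then have "step_ratio j / q (j+2) \<le> step_ratio j"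
    using q_ge_5_2[of "j+2"] by (simp add: divide_le_eq)
  with step show ?case by (simp add: step_ratio_Suc)
qed simp

text \<open>Stated with \<open>Suc\<close> so that it still applies after \<open>eval_nat_numeral\<close>.\<close>
lemma a_Suc_Suc_m: "a (Suc (Suc m)) = r ^ 2 * a (Suc (Suc (Suc (Suc m))))"
  using r_sq pos[of "m+4"] by (simp add: field_simps eval_nat_numeral)

lemma central_terms:
  "rel_term (m+3) = 1" "rel_term (m+2) = \<xi>" "\<xi> ^ 2 = 1 / q (m+4)"
  "rel_term (m+5) = \<xi> ^ 2 / q (m+5)" "rel_term (m+1) = \<xi> ^ 2 / q (m+3)"
  "rel_term (m+6) = \<xi> ^ 3 / (q (m+5) ^ 2 * q (m+6))" "rel_term m = \<xi> ^ 3 / (q (m+3) ^ 2 * q (m+2))"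
  "step_ratio (m+6) = \<xi> / (q (m+5) * q (m+6) * q (m+7))"
  using pos[of m] pos[of "m+1"] pos[of "m+2"] pos[of "m+3"] pos[of "m+4"] pos[of "m+5"]
    pos[of "m+6"] pos[of "m+7"] r_pos
  by (simp_all add: rel_term_def step_ratio_def \<xi>_def second_quotient_def a_Suc_Suc_m field_simps
      power2_eq_square power3_eq_cube eval_nat_numeral)

lemma step_ratio_before_m: "step_ratio (m - 1) = q (m+1) * q (m+2) * q (m+3) / \<xi>"
proof -
  obtain n where m: "m = Suc n" using m_ge by (cases m) auto
  show ?thesis
    unfolding \<xi>_def rel_term_def step_ratio_def second_quotient_def
    using pos[of n] pos[of "n+1"] pos[of "n+2"] pos[of "n+3"] pos[of "n+4"] pos[of "n+5"] r_pos
      a_Suc_Suc_m unfolding m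
    by (simp add: field_simps power2_eq_square power3_eq_cube eval_nat_numeral)
qed

lemma \<xi>_pos: "0 < \<xi>"
  using rel_term_pos by (simp add: \<xi>_def)

lemma q_ge_inverse_\<xi>_sq: "4 \<le> n \<Longrightarrow> 1 / \<xi> ^ 2 \<le> q (m+n)"
  using q_mono[of "m+4" "m+n"] m_ge central_terms(3) q_ge_5_2[of "m+4"] by simp

lemma \<xi>_cube_le: "\<xi> ^ 3 \<le> 1/4"
proof -
  have "(\<xi> ^ 3) ^ 2 = (\<xi> ^ 2) ^ 3"
    by (simp flip: power_mult add: mult.commute)
  also have "\<dots> = 1 / q (m+4) ^ 3"
    by (simp add: central_terms(3) power_divide)
  also have "\<dots> \<le> 1 / 16"
    using q_cube_ge_16[of "m+4"] q_ge_5_2[of "m+4"] by (intro divide_left_mono) auto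
  finally have "(\<xi> ^ 3) ^ 2 \<le> (1/4) ^ 2"
    by (simp add: power_divide)
  then show ?thesis
    by (rule power2_le_imp_le) simp
qed

lemma \<xi>_le: "\<xi> \<le> 63/100"
  using le_63_100_if_cube_le[OF \<xi>_pos \<xi>_cube_le] .

text \<open>This is where the constant \<open>c = 2 * root 3 2\<close> enters: \<open>(4\<xi>/c)\<^sup>2 \<le> 16/c\<^sup>3 = 1\<close>.\<close>
lemma second_terms_le: "4 * (rel_term (m+5) + rel_term (m+1)) \<le> 2 * \<xi>"
proof -
  define c :: real where "c = 2 * root 3 2"
  have c: "0 < c" "c ^ 3 = 16" "c \<le> q (m+3)" "c \<le> q (m+4)"
    using cube_two_cbrt_two two_cbrt_two_ge q_ge[of "m+3"] q_ge[of "m+4"] m_ge by (auto simp: c_def)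
  have \<xi>_sq_le: "\<xi> ^ 2 \<le> 1 / c"
    using c central_terms(3) by (simp add: frac_le)
  have "(4 * \<xi> / c) ^ 2 = 16 * \<xi> ^ 2 / c ^ 2"
    by (simp add: power_divide power_mult_distrib)
  also have "\<dots> \<le> 16 * (1 / c) / c ^ 2"
    using \<xi>_sq_le by (intro divide_right_mono mult_left_mono) auto
  also have "\<dots> = 1" using c by (simp add: power2_eq_square power3_eq_cube)
  finally have "(4 * \<xi> / c) ^ 2 \<le> 1 ^ 2"
    by simp
  then have ratio: "4 * \<xi> / c \<le> 1"
    by (rule power2_le_imp_le) simp
  have "rel_term (m+5) \<le> \<xi> ^ 2 / (1 / \<xi> ^ 2)"
    unfolding central_terms(4) using q_ge_inverse_\<xi>_sq[of 5] q_ge_5_2[of "m+5"] \<xi>_pos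
    by (intro divide_left_mono) (auto simp: zero_less_divide_iff)
  moreover have "rel_term (m+1) \<le> \<xi> ^ 2 / c"
    using c central_terms(5) \<xi>_pos by (simp add: frac_le)
  ultimately have "4 * (rel_term (m+5) + rel_term (m+1)) \<le> 4 * (\<xi> ^ 2 / (1 / \<xi> ^ 2) + \<xi> ^ 2 / c)"
    by simp
  also have "\<dots> = 2 * \<xi> * (2 * (\<xi> * \<xi> ^ 2) + 2 * (\<xi> / c))"
    by (simp add: algebra_simps power2_eq_square)
  also have "\<dots> \<le> 2 * \<xi> * (4 * \<xi> / c)"
    using mult_left_mono[OF \<xi>_sq_le, of \<xi>] \<xi>_pos by (intro mult_left_mono) auto
  also have "\<dots> \<le> 2 * \<xi>"
    using mult_left_mono[OF ratio, of "2 * \<xi>"] \<xi>_pos by simp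
  finally show ?thesis .
qed

lemma third_terms_le: "rel_term (m+6) \<le> \<xi> ^ 9" "rel_term m \<le> \<xi> ^ 3 / 16"
proof -
  have "q (m+5) ^ 2 * q (m+6) \<ge> (1 / \<xi> ^ 2) ^ 2 * (1 / \<xi> ^ 2)"
    using q_ge_inverse_\<xi>_sq[of 5] q_ge_inverse_\<xi>_sq[of 6] \<xi>_pos
    by (intro mult_mono power_mono) auto
  then have "rel_term (m+6) \<le> \<xi> ^ 3 / ((1 / \<xi> ^ 2) ^ 2 * (1 / \<xi> ^ 2))"
    unfolding central_terms(6) using \<xi>_pos q_pos[of "m+5"] q_pos[of "m+6"]
    by (intro divide_left_mono) auto
  then show "rel_term (m+6) \<le> \<xi> ^ 9"
    using \<xi>_pos by (simp add: power_divide flip: power_add power_mult)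
  have "q (m+3) ^ 2 * q (m+2) \<ge> (2 * root 3 2) ^ 2 * (2 * root 3 2)"
    using q_ge[of "m+2"] q_ge[of "m+3"] two_cbrt_two_ge
    by (intro mult_mono power_mono) auto
  then have "q (m+3) ^ 2 * q (m+2) \<ge> 16"
    using cube_two_cbrt_two by (simp add: power2_eq_square power3_eq_cube)
  then show "rel_term m \<le> \<xi> ^ 3 / 16"
    unfolding central_terms(7) using \<xi>_pos by (intro divide_left_mono) auto
qed

lemma upper_tail_le:
  "summable (\<lambda>i. rel_term (i + (m+7)))" "(\<Sum>i. rel_term (i + (m+7))) \<le> \<xi> ^ 16 / (1 - \<xi> ^ 7)"
proof -
  have "q (m+5) * q (m+6) * q (m+7) \<ge> (1 / \<xi> ^ 2) * (1 / \<xi> ^ 2) * (1 / \<xi> ^ 2)"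
    using q_ge_inverse_\<xi>_sq[of 5] q_ge_inverse_\<xi>_sq[of 6] q_ge_inverse_\<xi>_sq[of 7] \<xi>_pos
      q_pos[of "m+5"] q_pos[of "m+6"]
    by (intro mult_mono) auto
  then have "step_ratio (m+6) \<le> \<xi> / ((1 / \<xi> ^ 2) * (1 / \<xi> ^ 2) * (1 / \<xi> ^ 2))"
    unfolding central_terms(8) using \<xi>_pos q_pos[of "m+5"] q_pos[of "m+6"] q_pos[of "m+7"]
    by (intro divide_left_mono) auto
  also have "\<dots> = \<xi> ^ 7"
    using \<xi>_pos by (simp add: field_simps eval_nat_numeral)
  finally have ratio: "step_ratio (m+6) \<le> \<xi> ^ 7" .
  have step: "rel_term (Suc i + (m+6)) \<le> \<xi> ^ 7 * rel_term (i + (m+6))" for i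
  proof -
    have "step_ratio (i + (m+6)) \<le> \<xi> ^ 7"
      using step_ratio_antimono[of "m+6" "i + (m+6)"] ratio by simp
    then show ?thesis
      using rel_term_Suc[of "i + (m+6)"] rel_term_pos[of "i + (m+6)"]
      by (simp add: mult.commute mult_left_mono)
  qed
  have "\<xi> ^ 7 \<le> (63/100) ^ 7"
    using \<xi>_le \<xi>_pos by (intro power_mono) auto
  then have "\<xi> ^ 7 < 1" by (simp add: power_divide)
  note tail = suminf_Suc_le_ratio[of "\<lambda>i. rel_term (i + (m+6))", OF step
      less_imp_le[OF rel_term_pos] zero_le_power[OF less_imp_le[OF \<xi>_pos]] this]
  have shift: "(\<lambda>i. rel_term (Suc i + (m+6))) = (\<lambda>i. rel_term (i + (m+7)))"
    by (simp add: ac_simps)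
  show "summable (\<lambda>i. rel_term (i + (m+7)))"
    using tail(1) unfolding shift .
  have "(\<Sum>i. rel_term (i + (m+7))) \<le> rel_term (m+6) * \<xi> ^ 7 / (1 - \<xi> ^ 7)"
    using tail(2) unfolding shift by simp
  also have "\<dots> \<le> \<xi> ^ 9 * \<xi> ^ 7 / (1 - \<xi> ^ 7)"
    using third_terms_le(1) \<open>\<xi> ^ 7 < 1\<close> \<xi>_pos by (intro divide_right_mono mult_right_mono) auto
  finally show "(\<Sum>i. rel_term (i + (m+7))) \<le> \<xi> ^ 16 / (1 - \<xi> ^ 7)"
    by (simp flip: power_add)
qed

lemma lower_tail_le: "(\<Sum>j<m. rel_term j) \<le> \<xi> ^ 3 / 16 * (\<xi> / 16) / (1 - \<xi> / 16)"
proof -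
  have "q (m+1) * q (m+2) * q (m+3) \<ge> (2 * root 3 2) * (2 * root 3 2) * (2 * root 3 2)"
    using q_ge[of "m+1"] q_ge[of "m+2"] q_ge[of "m+3"] m_ge two_cbrt_two_ge
    by (intro mult_mono) auto
  then have ratio: "16 / \<xi> \<le> step_ratio (m - 1)"
    unfolding step_ratio_before_m using cube_two_cbrt_two \<xi>_pos
    by (simp add: power3_eq_cube divide_right_mono)
  have step: "rel_term j \<le> \<xi> / 16 * rel_term (Suc j)" if "j < m" for j
  proof -
    have "j \<le> m - 1" using that by simp
    then have "16 / \<xi> \<le> step_ratio j"
      using step_ratio_antimono ratio order_trans by blast
    then have "rel_term j * (16 / \<xi>) \<le> rel_term (Suc j)"
      unfolding rel_term_Suc using rel_term_pos[of j] by (rule mult_left_mono[OF _ less_imp_le])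
    then show ?thesis
      using \<xi>_pos by (simp add: field_simps)
  qed
  have "(\<Sum>j<m. rel_term j) \<le> rel_term m * (\<xi> / 16) / (1 - \<xi> / 16)"
    by (rule sum_lessThan_le_ratio) (use step rel_term_pos \<xi>_pos \<xi>_le in \<open>auto simp: less_imp_le\<close>)
  also have "\<dots> \<le> \<xi> ^ 3 / 16 * (\<xi> / 16) / (1 - \<xi> / 16)"
    using third_terms_le(2) \<xi>_pos \<xi>_le by (intro divide_right_mono mult_right_mono) auto
  finally show ?thesis .
qed

lemma tails_le: "(\<Sum>j<m. rel_term j) + (\<Sum>i. rel_term (i + (m+7))) \<le> 14/10000"
  using lower_tail_le upper_tail_le(2) tail_bound_numeric[OF \<xi>_pos \<xi>_cube_le] by linarith

lemma q_cube_inverse: "1 / q (m+4) ^ 3 = \<xi> ^ 6"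
proof -
  have "\<xi> ^ 6 = (\<xi> ^ 2) ^ 3" by (simp flip: power_mult)
  then show ?thesis by (simp add: central_terms(3) power_divide)
qed

lemma central_bound_pos:
  assumes "admissible m"
  shows "0 < 1 - 2 * \<xi> + (rel_term (m+5) + rel_term (m+1)) - (rel_term (m+6) + rel_term m) - 14/10000"
  using assms unfolding admissible_def
proof
  assume "16 \<le> q (m+4)"
  then have "\<xi> ^ 2 \<le> (1/4) ^ 2"
    using central_terms(3) by (simp add: power_divide frac_le)
  then have "\<xi> \<le> 1/4"
    by (rule power2_le_imp_le) simp
  then show ?thesis
    using large_case_numeric[OF \<xi>_pos] third_terms_le rel_term_pos[of "m+5"] rel_term_pos[of "m+1"]
    by fastforce
next
  assume flat: "q (m+5) \<le> 21/20 * q (m+4) \<and> q (m+4) \<le> 21/20 * q (m+2)"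
  have q_pos_near: "0 < q (m+2)" "0 < q (m+3)" "0 < q (m+4)" "0 < q (m+5)"
    using q_pos m_ge by auto
  have \<xi>4: "\<xi> ^ 4 = \<xi> ^ 2 / q (m+4)"
    using central_terms(3) by (simp add: power4_eq_xxxx power2_eq_square)
  have "\<xi> ^ 2 / (21/20 * q (m+4)) \<le> rel_term (m+5)"
    unfolding central_terms(4) using flat q_pos_near \<xi>_pos by (intro divide_left_mono) auto
  moreover have "\<xi> ^ 2 / q (m+4) \<le> rel_term (m+1)"
    unfolding central_terms(5) using q_mono[of "m+3" "m+4"] m_ge q_pos_near \<xi>_pos
    by (intro divide_left_mono) auto
  ultimately have second: "41/21 * \<xi> ^ 4 \<le> rel_term (m+5) + rel_term (m+1)"
    unfolding \<xi>4 by (simp add: field_simps)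
  have "(20/21 * q (m+4)) ^ 2 * (20/21 * q (m+4)) \<le> q (m+3) ^ 2 * q (m+2)"
    using flat q_mono[of "m+2" "m+3"] q_pos_near m_ge by (intro mult_mono power_mono) auto
  then have "rel_term m \<le> \<xi> ^ 3 / ((20/21 * q (m+4)) ^ 2 * (20/21 * q (m+4)))"
    unfolding central_terms(7) using q_pos_near \<xi>_pos by (intro divide_left_mono) auto
  also have "\<dots> = (21/20) ^ 3 * \<xi> ^ 3 * (1 / q (m+4) ^ 3)"
    by (simp add: power2_eq_square power3_eq_cube field_simps)
  also have "\<dots> = (21/20) ^ 3 * \<xi> ^ 9"
    by (simp add: q_cube_inverse flip: power_add)
  finally have "rel_term (m+6) + rel_term m \<le> (1 + (21/20) ^ 3) * \<xi> ^ 9"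
    using third_terms_le(1) by (simp add: algebra_simps)
  then show ?thesis
    using flat_case_numeric[OF \<xi>_pos \<xi>_cube_le] second by linarith
qed

lemma suminf_pos_if_central_terms:
  fixes T :: "nat \<Rightarrow> real" and t :: real
  assumes "admissible m" and "summable rel_term" and bound: "\<And>j. \<bar>T j\<bar> \<le> rel_term j"
    and t: "-1 \<le> t" "t \<le> 1"
    and T: "T (m+3) = 1"
      "T (m+2) = rel_term (m+2) * t" "T (m+4) = rel_term (m+4) * t"
      "T (m+1) = rel_term (m+1) * (2 * t^2 - 1)" "T (m+5) = rel_term (m+5) * (2 * t^2 - 1)"
      "T m = rel_term m * (4 * t^3 - 3 * t)" "T (m+6) = rel_term (m+6) * (4 * t^3 - 3 * t)"
  shows "0 < suminf T"
proof -
  define d2 where "d2 = rel_term (m+5) + rel_term (m+1)"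
  define d3 where "d3 = rel_term (m+6) + rel_term m"
  have "(\<Sum>i<7. T (m + i)) = T m + T (m+1) + T (m+2) + T (m+3) + T (m+4) + T (m+5) + T (m+6)"
    by (simp add: eval_nat_numeral)
  also have "\<dots> = 1 + 2 * \<xi> * t + d2 * (2 * t^2 - 1) + d3 * (4 * t^3 - 3 * t)"
    using T central_terms(2) by (simp add: d2_def d3_def \<xi>_def algebra_simps)
  also have "\<dots> \<ge> 1 - 2 * \<xi> + d2 - d3"
    by (rule chebyshev_sum_ge)
      (use t second_terms_le rel_term_pos in \<open>auto simp: d2_def d3_def less_imp_le add_nonneg_nonneg\<close>)
  finally have "1 - 2 * \<xi> + d2 - d3 - 14/10000 \<le> suminf T"
    using suminf_ge_block_minus_tails(2)[OF \<open>summable rel_term\<close> bound, of m 7] tails_le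
    by linarith
  with central_bound_pos[OF \<open>admissible m\<close>] show ?thesis
    by (simp add: d2_def d3_def)
qed

lemma summable_rel_term:
  assumes "\<And>z. summable (\<lambda>k. complex_of_real (a k) * z ^ k)"
  shows "summable rel_term"
proof -
  have "summable (\<lambda>j. Re (complex_of_real (a j) * complex_of_real r ^ j))"
    using summable_Re[OF assms] .
  then have "summable (\<lambda>j. a j * r ^ j)"
    by (simp flip: of_real_power)
  then show ?thesis
    unfolding rel_term_def by (rule summable_divide)
qed

lemma suminf_pos_on_unit_circle:
  assumes "summable rel_term" and "admissible m" and w: "norm w = 1"
  defines "T \<equiv> \<lambda>j. rel_term j * Re (w ^ j * cnj w ^ (m+3))"
  shows "summable T" and "0 < suminf T"
proof -
  have bound: "\<bar>T j\<bar> \<le> rel_term j" for j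
    using abs_Re_le_cmod[of "w ^ j * cnj w ^ (m+3)"] w rel_term_pos[of j]
    by (simp add: T_def abs_mult norm_mult norm_power)
  show "summable T"
    using suminf_ge_block_minus_tails(1)[OF \<open>summable rel_term\<close> bound] .
  show "0 < suminf T"
  proof (rule suminf_pos_if_central_terms[OF \<open>admissible m\<close> \<open>summable rel_term\<close> bound])
    show "-1 \<le> Re w" "Re w \<le> 1"
      using abs_Re_le_cmod[of w] w by auto
    have idx: "m + 3 + 0 = m + 3" "m + 3 + 1 = m + 4" "m + 3 + 2 = m + 5" "m + 3 + 3 = m + 6"
      "m + 3 - 1 = m + 2" "m + 3 - 2 = m + 1" "m + 3 - 3 = m"
      by simp_all
    have up: "T (m + 3 + i) = rel_term (m + 3 + i) * Re (w ^ i)" for i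
      unfolding T_def power_mult_cnj_power_unit(1)[OF w] ..
    have down: "T (m + 3 - i) = rel_term (m + 3 - i) * Re (w ^ i)" if "i \<le> m + 3" for i
      unfolding T_def power_mult_cnj_power_unit(2)[OF w that] ..
    show "T (m+3) = 1"
      using up[of 0, unfolded idx] central_terms(1) by simp
    show "T (m+2) = rel_term (m+2) * Re w" "T (m+4) = rel_term (m+4) * Re w"
      using up[of 1, unfolded idx] down[of 1, unfolded idx] by simp_all
    show "T (m+1) = rel_term (m+1) * (2 * (Re w)^2 - 1)" "T (m+5) = rel_term (m+5) * (2 * (Re w)^2 - 1)"
      using up[of 2, unfolded idx] down[of 2, unfolded idx] Re_power2_unit[OF w] by simp_all
    show "T m = rel_term m * (4 * (Re w)^3 - 3 * Re w)" "T (m+6) = rel_term (m+6) * (4 * (Re w)^3 - 3 * Re w)"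
      using up[of 3, unfolded idx] down[of 3, unfolded idx] Re_power3_unit[OF w] by simp_all
  qed
qed

lemma dominant_term_on_circle:
  assumes entire: "\<And>z. summable (\<lambda>k. complex_of_real (a k) * z ^ k)"
    and "admissible m" and z: "norm z = r"
  shows "0 < Re (power_series_fun a z * cnj (complex_of_real (a (m+3)) * z ^ (m+3)))"
proof -
  define w where "w = z / complex_of_real r"
  have w: "norm w = 1" using z r_pos by (simp add: w_def norm_divide)
  have zw: "z = complex_of_real r * w" using r_pos by (simp add: w_def)
  define T where "T j = rel_term j * Re (w ^ j * cnj w ^ (m+3))" for j
  define C where "C = (a (m+3) * r ^ (m+3)) ^ 2"
  define W where "W = cnj (complex_of_real (a (m+3)) * z ^ (m+3))"
  have "complex_of_real (a j) * z ^ j * W = complex_of_real (C * rel_term j) * (w ^ j * cnj w ^ (m+3))" for j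
    using pos[of "m+3"] r_pos by (simp add: W_def C_def rel_term_def zw power2_eq_square field_simps)
  then have "Re (complex_of_real (a j) * z ^ j * W) = C * T j" for j
    by (simp add: T_def)
  moreover have "Re (power_series_fun a z * W) = (\<Sum>j. Re (complex_of_real (a j) * z ^ j * W))"
    unfolding power_series_fun_def
    using Re_suminf[OF summable_mult2[OF entire, of z W]] suminf_mult2[OF entire, of z W] by simp
  moreover note suminf_pos_on_unit_circle[OF summable_rel_term[OF entire] \<open>admissible m\<close> w,
      folded T_def]
  moreover have "0 < C"
    using pos[of "m+3"] r_pos by (simp add: C_def)
  ultimately show ?thesis
    by (simp add: W_def suminf_mult)
qed

end

section \<open>The zeros of \<open>f\<close>\<close>

lemma (in increasing_second_quotients) zero_count_radius:
  assumes entire: "\<And>z. summable (\<lambda>k. complex_of_real (a k) * z ^ k)"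
    and "2 \<le> m" "admissible m"
  shows "zero_count (power_series_fun a) (radius m) = int (m + 3)"
proof -
  interpret central_circle a m "radius m"
    using \<open>2 \<le> m\<close> radius_pos radius_sq by unfold_locales auto
  show ?thesis
    by (rule zero_count_dominant_monomial[OF power_series_fun_holomorphic[OF entire] _ radius_pos
          dominant_term_on_circle[OF entire \<open>admissible m\<close>]])
      (use pos[of "m+3"] in simp)
qed

theorem theorem1:
  fixes a :: "nat \<Rightarrow> real"
  assumes entire: "\<And>z::complex. summable (\<lambda>k. complex_of_real (a k) * z ^ k)"
    and pos: "\<And>k. a k > 0"
    and q2: "2 * root 3 2 \<le> second_quotient a 2"
    and mono: "\<And>n. n \<ge> 2 \<Longrightarrow> second_quotient a n \<le> second_quotient a (Suc n)"
  shows "finite {z. power_series_fun a z = 0 \<and>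
                  (z \<notin> \<real> \<or> deriv (power_series_fun a) z = 0)}"
proof -
  interpret increasing_second_quotients a
    using pos q2 mono by unfold_locales auto
  have "eventually (\<lambda>m. 2 \<le> m \<and> admissible m \<and> admissible (Suc m)) sequentially"
    using eventually_ge_at_top[of 2] eventually_admissible
      eventually_sequentially_Suc[THEN iffD2, OF eventually_admissible]
    by eventually_elim auto
  then have "eventually (\<lambda>m. zero_count (power_series_fun a) (radius (Suc m))
      = zero_count (power_series_fun a) (radius m) + 1) sequentially"
    by eventually_elim (simp add: zero_count_radius[OF entire])
  moreover have "power_series_fun a 0 \<noteq> 0"
    using pos[of 0] by (simp add: power_series_fun_0)
  ultimately show ?thesis
    by (rule finite_nonreal_or_multiple_zeros[OF power_series_fun_holomorphic[OF entire] _
        power_series_fun_cnj[OF entire] filterlim_radius, rotated])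
qed

end
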